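(* Let $R$ be a rational map of degree $d\ge 2$ all of whose fixed points except one are attracting and the remaining one is repelling; denote the attracting fixed points by $\alpha_1,\dots,\alpha_d$. Suppose there is $h\in\mathbb{C}\setminus\{0\}$ such that for each $i=1,\dots,d$ the multiplier of $\alpha_i$ equals $\frac{m_i-h}{m_i}$ for some $m_i\in\mathbb{N}$. Then for a suitable Möbius map $\varphi$ (sending the repelling fixed point to $\infty$), $\varphi\circ R\circ\varphi^{-1}=N_{h,p}$, where $p(z)=\prod_{i=1}^d\big(z-\varphi(\alpha_i)\big)^{m_i}$.
   Context: For a polynomial $p$ and $h\in\mathbb{C}$, $N_{h,p}(z)=z-h\,\frac{p(z)}{p'(z)}$. *)

theory Defs
  imports "HOL-Analysis.Analysis" "HOL-Computational_Algebra.Polynomial_Factorial" "HOL-Computational_Algebra.Field_as_Ring"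
begin

text \<open>The Riemann sphere: None is the point at infinity, Some z the finite point z.\<close>
type_synonym csphere = "complex option"

text \<open>Sphere map of the quotient P/Q, assuming P, Q coprime.\<close>
definition rat_map0 :: "complex poly \<Rightarrow> complex poly \<Rightarrow> csphere \<Rightarrow> csphere" where
  "rat_map0 P Q x = (case x of
       Some z \<Rightarrow> (if poly Q z = 0 then None else Some (poly P z / poly Q z))
     | None \<Rightarrow> (if degree P > degree Q then None
                else Some (coeff P (degree Q) / lead_coeff Q)))"

definition rat_map :: "complex poly \<Rightarrow> complex poly \<Rightarrow> csphere \<Rightarrow> csphere" where
  "rat_map P Q = rat_map0 (P div gcd P Q) (Q div gcd P Q)"

definition mobius :: "complex \<Rightarrow> complex \<Rightarrow> complex \<Rightarrow> complex \<Rightarrow> csphere \<Rightarrow> csphere" where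
  "mobius a b c e = rat_map [:b, a:] [:e, c:]"

text \<open>Local coordinate charts of the sphere centred at a point p (mapping p to 0).\<close>
definition to_chart :: "csphere \<Rightarrow> csphere \<Rightarrow> complex" where
  "to_chart p q = (case p of
       Some a \<Rightarrow> (case q of Some x \<Rightarrow> x - a | None \<Rightarrow> 0)
     | None \<Rightarrow> (case q of Some x \<Rightarrow> inverse x | None \<Rightarrow> 0))"

definition from_chart :: "csphere \<Rightarrow> complex \<Rightarrow> csphere" where
  "from_chart p w = (case p of
       Some a \<Rightarrow> Some (w + a)
     | None \<Rightarrow> (if w = 0 then None else Some (inverse w)))"

definition multiplier :: "(csphere \<Rightarrow> csphere) \<Rightarrow> csphere \<Rightarrow> complex" where
  "multiplier f p = deriv (\<lambda>w. to_chart p (f (from_chart p w))) 0"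

text \<open>Relaxed Newton map N_{h,p}(z) = z - h p(z)/p'(z), as a map of the sphere.\<close>
definition newton_map :: "complex \<Rightarrow> complex poly \<Rightarrow> csphere \<Rightarrow> csphere" where
  "newton_map h p = rat_map ([:0, 1:] * pderiv p - smult h p) (pderiv p)"

end

theory Submission
  imports Defs "HOL-Computational_Algebra.Fundamental_Theorem_Algebra"
begin

text \<open>
  Conjugating by z \<mapsto> 1/(z - b) sends the repelling fixed point b to \<infinity>, so the new map is
  A/B with deg B < d and deg A \<le> d; its fixed points are the d roots a_i of F = zB - A, with
  multipliers 1 - F'(a_i)/B(a_i), and conjugation preserves multipliers. Hence F = c \<Prod>(z - a_i),
  and the multiplier data h B(a_i) = m_i F'(a_i) determine B, which has degree < d, by
  interpolation: h B = c \<Sum>_i m_i \<Prod>_(j \<noteq> i) (z - a_j). For p = \<Prod>(z - a_i)^(m_i) this says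
  h p/p' = F/B, that is A/B = z - F/B = N_(h,p).
\<close>

section \<open>Rational maps of the sphere\<close>

text \<open>The point with homogeneous coordinates [u : v]. The excluded pair [0 : 0] is sent to
  \<open>None\<close>; coprimality rules it out wherever the lemmas below use it.\<close>

definition sphere_point :: "complex \<Rightarrow> complex \<Rightarrow> csphere" where
  "sphere_point u v = (if v = 0 then None else Some (u / v))"

lemma sphere_point_mult [simp]:
  "c \<noteq> 0 \<Longrightarrow> sphere_point (c * u) (c * v) = sphere_point u v"
  by (simp add: sphere_point_def)

lemma rat_map0_Some: "rat_map0 P Q (Some z) = sphere_point (poly P z) (poly Q z)"
  by (simp add: rat_map0_def sphere_point_def)

lemma rat_map0_None:
  assumes "d = max (degree P) (degree Q)" "d > 0"
  shows "rat_map0 P Q None = sphere_point (coeff P d) (coeff Q d)"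
  using assms by (auto simp: rat_map0_def sphere_point_def max_def coeff_eq_0)

lemma rat_map0_fixed_Some:
  assumes "rat_map0 P Q (Some x) = Some x"
  shows "poly Q x \<noteq> 0" and "poly P x = x * poly Q x"
  using assms by (auto simp: rat_map0_Some sphere_point_def field_simps split: if_splits)

lemma rat_map0_fixed_None: "rat_map0 P Q None = None \<Longrightarrow> degree Q < degree P"
  by (auto simp: rat_map0_def split: if_splits)

lemma rat_map0_smult: "c \<noteq> 0 \<Longrightarrow> rat_map0 (smult c A) (smult c B) = rat_map0 A B"
  by (rule ext) (simp add: rat_map0_def split: option.split)

lemma rat_map_mult_coprime:
  fixes A B G :: "complex poly"
  assumes "coprime A B" "G \<noteq> 0"
  shows "rat_map (G * A) (G * B) = rat_map0 A B"
proof -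
  obtain c where c: "unit_factor G = [:c:]" "c \<noteq> 0"
    using unit_factor_is_unit[OF assms(2)] by (metis dvd_0_left is_unit_poly_iff one_neq_zero)
  have gcd: "gcd (G * A) (G * B) = normalize G"
    using assms(1) by (simp add: gcd_mult_left)
  have "G * X div normalize G = smult c X" for X
  proof -
    have "G = normalize G * [:c:]"
      using normalize_mult_unit_factor c(1) by metis
    then have "G * X = normalize G * smult c X"
      by (metis mult.assoc mult_smult_left mult_1_left smult_one)
    then show ?thesis
      using assms(2) by (metis nonzero_mult_div_cancel_left normalize_eq_0_iff)
  qed
  then show ?thesis
    unfolding rat_map_def gcd using rat_map0_smult[OF c(2)] by simp
qed

lemma rat_map_coprime:
  fixes A B :: "complex poly"
  assumes "coprime A B"
  shows "rat_map A B = rat_map0 A B"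
  using rat_map_mult_coprime[OF assms, of 1] by simp

lemma coprime_if_no_common_root:
  fixes A B :: "complex poly"
  assumes "A \<noteq> 0 \<or> B \<noteq> 0" and "\<And>z. poly A z = 0 \<Longrightarrow> poly B z \<noteq> 0"
  shows "coprime A B"
proof -
  have "degree (gcd A B) = 0"
  proof (rule ccontr)
    assume "degree (gcd A B) \<noteq> 0"
    then obtain z where "poly (gcd A B) z = 0"
      by (metis constant_degree fundamental_theorem_of_algebra)
    then have "poly A z = 0" "poly B z = 0"
      by (metis dvdE gcd_dvd1 gcd_dvd2 mult_eq_0_iff poly_mult)+
    with assms(2) show False by blast
  qed
  moreover have "gcd A B \<noteq> 0" using assms(1) by simp
  ultimately show ?thesis using is_unit_iff_degree is_unit_gcd by blast
qed

section \<open>Reciprocal polynomials\<close>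

lemma poly_eqI_nonzero:
  fixes p q :: "'a::{idom, ring_char_0} poly"
  assumes "\<And>x. x \<noteq> 0 \<Longrightarrow> poly p x = poly q x"
  shows "p = q"
proof (rule ccontr)
  assume "p \<noteq> q"
  then have "finite {x. poly (p - q) x = 0}"
    by (intro poly_roots_finite) simp
  moreover have "- {0} \<subseteq> {x. poly (p - q) x = 0}"
    using assms by auto
  ultimately have "finite (- {0 :: 'a})"
    by (rule finite_subset[rotated])
  then show False
    using infinite_UNIV_char_0 by (metis Compl_eq_Diff_UNIV finite_Diff2 finite.emptyI finite_insert)
qed

lemma coeff_pcompose_shift_top:
  fixes p :: "'a::idom poly"
  assumes "degree p \<le> n"
  shows "coeff (p \<circ>\<^sub>p [:b, 1:]) n = coeff p n"
proof (cases "degree p = n")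
  case True
  have "lead_coeff (p \<circ>\<^sub>p [:b, 1:]) = lead_coeff p"
    by (simp add: lead_coeff_comp)
  then show ?thesis
    using True by (simp add: degree_pcompose)
next
  case False
  then show ?thesis
    using assms by (simp add: coeff_eq_0 degree_pcompose)
qed

definition recip_poly :: "nat \<Rightarrow> 'a::comm_ring_1 poly \<Rightarrow> 'a poly" where
  "recip_poly n p = (\<Sum>k\<le>n. monom (coeff p k) (n - k))"

lemma coeff_recip_poly: "coeff (recip_poly n p) j = (if j \<le> n then coeff p (n - j) else 0)"
proof -
  have "coeff (recip_poly n p) j = (\<Sum>k\<le>n. if k = n - j \<and> j \<le> n then coeff p k else 0)"
    unfolding recip_poly_def coeff_sum coeff_monom by (intro sum.cong) auto
  also have "\<dots> = (if j \<le> n then coeff p (n - j) else 0)"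
    by (cases "j \<le> n") (simp_all add: sum.delta)
  finally show ?thesis .
qed

lemma degree_recip_poly_le: "degree (recip_poly n p) \<le> n"
  unfolding recip_poly_def by (intro degree_sum_le order.trans[OF degree_monom_le]) auto

lemma poly_recip_poly:
  fixes p :: "'a::field poly"
  assumes "degree p \<le> n" "w \<noteq> 0"
  shows "poly (recip_poly n p) w = w ^ n * poly p (inverse w)"
proof -
  have "poly p (inverse w) = (\<Sum>k\<le>n. coeff p k * inverse w ^ k)"
    unfolding poly_altdef using assms(1)
    by (intro sum.mono_neutral_left) (auto simp: coeff_eq_0)
  then have "w ^ n * poly p (inverse w) = (\<Sum>k\<le>n. coeff p k * (w ^ n * inverse w ^ k))"
    by (simp add: sum_distrib_left mult_ac)
  also have "\<dots> = (\<Sum>k\<le>n. coeff p k * w ^ (n - k))"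
    by (intro sum.cong) (use assms(2) in \<open>auto simp: power_diff power_inverse field_simps\<close>)
  finally have "w ^ n * poly p (inverse w) = (\<Sum>k\<le>n. coeff p k * w ^ (n - k))" .
  then show ?thesis
    by (simp add: recip_poly_def poly_sum poly_monom)
qed

lemma poly_recip_poly_pcompose:
  fixes p :: "'a::field poly"
  assumes "degree p \<le> n" "w \<noteq> 0"
  shows "poly (recip_poly n (p \<circ>\<^sub>p [:b, 1:])) w = w ^ n * poly p (b + inverse w)"
  using assms by (simp add: poly_recip_poly degree_pcompose poly_pcompose)

lemma pderiv_recip_poly_at_root:
  fixes p :: "complex poly"
  assumes "degree p \<le> n" "w \<noteq> 0" "poly p (inverse w) = 0"
  shows "w\<^sup>2 * poly (pderiv (recip_poly n p)) w = - (w ^ n * poly (pderiv p) (inverse w))"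
proof -
  note product_rule =
    DERIV_mult[OF DERIV_power[OF DERIV_ident] DERIV_chain2[OF poly_DERIV DERIV_inverse[OF assms(2)]]]
  have "((\<lambda>v. v ^ n * poly p (inverse v)) has_field_derivative
      - (w ^ n * poly (pderiv p) (inverse w)) / w\<^sup>2) (at w)"
    using product_rule[of n p] assms(3) by (simp add: field_simps power2_eq_square)
  then have "(poly (recip_poly n p) has_field_derivative
      - (w ^ n * poly (pderiv p) (inverse w)) / w\<^sup>2) (at w)"
    by (rule has_field_derivative_transform_within_open[where S = "- {0}"])
       (use assms in \<open>auto simp: poly_recip_poly\<close>)
  then have "poly (pderiv (recip_poly n p)) w = - (w ^ n * poly (pderiv p) (inverse w)) / w\<^sup>2"
    by (rule DERIV_unique[OF poly_DERIV])
  then show ?thesis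
    using assms(2) by (simp add: field_simps)
qed

lemma poly_recip_poly_pcompose_0:
  fixes p :: "'a::idom poly"
  assumes "degree p \<le> n"
  shows "poly (recip_poly n (p \<circ>\<^sub>p [:b, 1:])) 0 = coeff p n"
  using assms by (simp add: poly_0_coeff_0 coeff_recip_poly coeff_pcompose_shift_top)

lemma coeff_recip_poly_pcompose_top: "coeff (recip_poly n (p \<circ>\<^sub>p [:b, 1:])) n = poly p b"
  by (simp add: coeff_recip_poly poly_0_coeff_0[symmetric] poly_pcompose)

lemma poly_pderiv_recip_poly_pcompose_0:
  fixes p :: "'a::idom poly"
  assumes "degree p \<le> n"
  shows "poly (pderiv (recip_poly (Suc n) (p \<circ>\<^sub>p [:b, 1:]))) 0 = coeff p n"
  using assms by (simp add: poly_0_coeff_0 coeff_pderiv coeff_recip_poly coeff_pcompose_shift_top)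

lemma pderiv_recip_poly_pcompose_at_root:
  fixes p :: "complex poly"
  assumes "degree p \<le> n" "w \<noteq> 0" "poly p (b + inverse w) = 0"
  shows "w\<^sup>2 * poly (pderiv (recip_poly n (p \<circ>\<^sub>p [:b, 1:]))) w
    = - (w ^ n * poly (pderiv p) (b + inverse w))"
  using pderiv_recip_poly_at_root[of "p \<circ>\<^sub>p [:b, 1:]" n w] assms
  by (simp add: degree_pcompose poly_pcompose pderiv_pcompose pderiv_pCons)

section \<open>Multipliers\<close>

lemma multiplier_rat_map_Some:
  fixes P Q :: "complex poly"
  assumes "coprime P Q" and fixed: "rat_map P Q (Some x) = Some x"
  shows "multiplier (rat_map P Q) (Some x) = 1 - poly (pderiv ([:0, 1:] * Q - P)) x / poly Q x"
proof -
  have R: "rat_map P Q = rat_map0 P Q"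
    using assms(1) by (rule rat_map_coprime)
  have Qx: "poly Q x \<noteq> 0" and Px: "poly P x = x * poly Q x"
    using fixed by (simp_all add: R rat_map0_fixed_Some)
  have shift: "((\<lambda>w. poly S (w + x)) has_field_derivative poly (pderiv S) x) (at 0)" for S
    using DERIV_chain2[OF poly_DERIV[of S "0 + x"] DERIV_add[OF DERIV_ident DERIV_const[of x]]]
    by simp
  define U where "U = {w. poly Q (w + x) \<noteq> 0}"
  have "open U"
    unfolding U_def by (intro open_Collect_neq continuous_intros)
  have "0 \<in> U"
    using Qx by (simp add: U_def)
  have chart: "to_chart (Some x) (rat_map P Q (from_chart (Some x) w))
      = poly P (w + x) / poly Q (w + x) - x" if "w \<in> U" for w
    using that by (simp add: U_def R rat_map0_def to_chart_def from_chart_def)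
  have "((\<lambda>w. poly P (w + x) / poly Q (w + x) - x) has_field_derivative
      (poly (pderiv P) x * poly Q x - poly P x * poly (pderiv Q) x) / (poly Q x * poly Q x)) (at 0)"
    using DERIV_diff[OF DERIV_divide[OF shift shift] DERIV_const] Qx by simp
  then have "((\<lambda>w. to_chart (Some x) (rat_map P Q (from_chart (Some x) w))) has_field_derivative
      (poly (pderiv P) x * poly Q x - poly P x * poly (pderiv Q) x) / (poly Q x * poly Q x)) (at 0)"
    by (rule has_field_derivative_transform_within_open[OF _ \<open>open U\<close> \<open>0 \<in> U\<close>])
       (simp add: chart)
  then have "multiplier (rat_map P Q) (Some x)
      = (poly (pderiv P) x * poly Q x - poly P x * poly (pderiv Q) x) / (poly Q x * poly Q x)"
    unfolding multiplier_def by (rule DERIV_imp_deriv)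
  also have "\<dots> = 1 - poly (pderiv ([:0, 1:] * Q - P)) x / poly Q x"
  proof -
    have "poly (pderiv ([:0, 1:] * Q - P)) x = x * poly (pderiv Q) x + poly Q x - poly (pderiv P) x"
      by (simp add: pderiv_mult pderiv_diff pderiv_pCons)
    then show ?thesis
      using Qx by (simp add: Px field_simps)
  qed
  finally show ?thesis .
qed

lemma multiplier_rat_map_None:
  fixes P Q :: "complex poly"
  assumes "coprime P Q" and fixed: "rat_map P Q None = None"
  shows "multiplier (rat_map P Q) None = coeff Q (degree P - 1) / lead_coeff P"
proof -
  have R: "rat_map P Q = rat_map0 P Q"
    using assms(1) by (rule rat_map_coprime)
  define n where "n = degree P"
  have deg: "degree Q < n"
    using fixed by (simp add: R n_def rat_map0_fixed_None)
  then have "P \<noteq> 0" "n > 0"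
    by (auto simp: n_def)
  define Pr Qr where "Pr = recip_poly n P" and "Qr = recip_poly n Q"
  have Pr0: "poly Pr 0 = lead_coeff P" and Qr0: "poly Qr 0 = 0"
    using deg by (simp_all add: Pr_def Qr_def poly_0_coeff_0 coeff_recip_poly n_def coeff_eq_0)
  have chart: "to_chart None (rat_map P Q (from_chart None w)) = poly Qr w / poly Pr w" for w
  proof (cases "w = 0")
    case True
    then show ?thesis
      using fixed Qr0 by (simp add: from_chart_def to_chart_def)
  next
    case False
    have "poly Qr w = w ^ n * poly Q (inverse w)" "poly Pr w = w ^ n * poly P (inverse w)"
      using deg False by (simp_all add: Pr_def Qr_def n_def poly_recip_poly)
    then show ?thesis
      using False by (simp add: from_chart_def to_chart_def R rat_map0_def)
  qed
  have "((\<lambda>w. poly Qr w / poly Pr w) has_field_derivative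
      (poly (pderiv Qr) 0 * poly Pr 0 - poly Qr 0 * poly (pderiv Pr) 0) / (poly Pr 0 * poly Pr 0)) (at 0)"
    using Pr0 \<open>P \<noteq> 0\<close> by (intro DERIV_divide poly_DERIV) simp
  then have "multiplier (rat_map P Q) None = poly (pderiv Qr) 0 / lead_coeff P"
    unfolding multiplier_def chart using Pr0 Qr0 \<open>P \<noteq> 0\<close>
    by (simp add: DERIV_imp_deriv)
  also have "poly (pderiv Qr) 0 = coeff Q (n - 1)"
    using \<open>n > 0\<close> by (simp add: Qr_def poly_0_coeff_0 coeff_pderiv coeff_recip_poly)
  finally show ?thesis
    by (simp add: n_def)
qed

section \<open>Moving a fixed point to infinity\<close>

definition recip_at :: "complex \<Rightarrow> csphere \<Rightarrow> csphere" where
  "recip_at b q = (case q of None \<Rightarrow> Some 0 | Some z \<Rightarrow> if z = b then None else Some (inverse (z - b)))"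

definition recip_at_inv :: "complex \<Rightarrow> csphere \<Rightarrow> csphere" where
  "recip_at_inv b q = (case q of None \<Rightarrow> Some b | Some w \<Rightarrow> if w = 0 then None else Some (b + inverse w))"

lemma recip_at_inv_recip_at [simp]: "recip_at_inv b (recip_at b q) = q"
  by (cases q) (auto simp: recip_at_def recip_at_inv_def)

lemma recip_at_recip_at_inv [simp]: "recip_at b (recip_at_inv b q) = q"
  by (cases q) (auto simp: recip_at_def recip_at_inv_def)

lemma inj_recip_at: "inj (recip_at b)"
  by (metis injI recip_at_inv_recip_at)

lemma inv_recip_at: "inv (recip_at b) = recip_at_inv b"
  by (intro inv_unique_comp ext) simp_all

lemma mobius_recip_at: "mobius 0 1 1 (- b) = recip_at b"
proof
  fix q
  have "mobius 0 1 1 (- b) = rat_map0 1 [:- b, 1:]"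
    unfolding mobius_def by (simp add: one_pCons[symmetric] rat_map_coprime)
  then show "mobius 0 1 1 (- b) q = recip_at b q"
    by (cases q) (simp_all add: rat_map0_def recip_at_def divide_inverse)
qed

lemma mobius_id: "mobius 1 0 0 1 = id"
proof
  fix q
  have "mobius 1 0 0 1 = rat_map0 [:0, 1:] 1"
    unfolding mobius_def by (simp add: one_pCons[symmetric] rat_map_coprime)
  then show "mobius 1 0 0 1 q = id q"
    by (cases q) (simp_all add: rat_map0_def)
qed

lemma recip_at_sphere_point:
  "u \<noteq> 0 \<or> v \<noteq> 0 \<Longrightarrow> recip_at b (sphere_point u v) = sphere_point v (u - b * v)"
  by (auto simp: recip_at_def sphere_point_def field_simps)

lemma conj_fixed_point:
  assumes "inj M" "M \<circ> f \<circ> inv M = g" "f q = q"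
  shows "g (M q) = M q"
  using assms by (metis comp_apply inv_f_f)

text \<open>In homogeneous coordinates R acts as [u : v] \<mapsto> [P_h(u,v) : Q_h(u,v)], with P_h, Q_h the
  homogenisations of degree d, and z \<mapsto> 1/(z - b) acts linearly; writing the conjugate in the
  affine chart gives A(w) = w^d Q(b + 1/w) and B(w) = w^d (P - b Q)(b + 1/w).\<close>

lemma recip_conj_coprime:
  fixes P Q :: "complex poly"
  assumes cop: "coprime P Q" and d: "d = max (degree P) (degree Q)" "d > 0"
    and fixed: "rat_map P Q (Some b) = Some b"
  defines "A \<equiv> recip_poly d (Q \<circ>\<^sub>p [:b, 1:])" and "B \<equiv> recip_poly d ((P - smult b Q) \<circ>\<^sub>p [:b, 1:])"
  shows "coprime A B" and "degree A = d" and "degree B < d"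
proof -
  have Qb: "poly Q b \<noteq> 0" and Pb: "poly P b = b * poly Q b"
    using fixed by (simp_all add: rat_map_coprime[OF cop] rat_map0_fixed_Some)
  have deg: "degree Q \<le> d" "degree (P - smult b Q) \<le> d"
    using d(1) by (auto intro!: degree_diff_le order.trans[OF degree_smult_le])
  have A_d: "coeff A d = poly Q b" and B_d: "coeff B d = 0"
    by (simp_all add: A_def B_def coeff_recip_poly_pcompose_top Pb)
  have "degree A \<le> d" "degree B \<le> d"
    unfolding A_def B_def by (rule degree_recip_poly_le)+
  then show "degree A = d"
    using A_d Qb by (simp add: le_antisym le_degree)
  have "degree B \<noteq> d"
    using B_d d(2) by (metis leading_coeff_0_iff degree_0 less_numeral_extra(3))
  then show "degree B < d"
    using \<open>degree B \<le> d\<close> by simp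
  show "coprime A B"
  proof (rule coprime_if_no_common_root)
    show "A \<noteq> 0 \<or> B \<noteq> 0"
      using A_d Qb by auto
    fix w
    assume A_w: "poly A w = 0"
    show "poly B w \<noteq> 0"
    proof (cases "w = 0")
      case True
      have "coeff P d \<noteq> 0 \<or> coeff Q d \<noteq> 0"
        using d by (cases "degree Q \<le> degree P") (auto simp: max_def)
      then show ?thesis
        using True A_w deg by (auto simp: A_def B_def poly_recip_poly_pcompose_0)
    next
      case False
      then have "poly Q (b + inverse w) = 0"
        using A_w deg by (simp add: A_def poly_recip_poly_pcompose)
      moreover from this have "poly P (b + inverse w) \<noteq> 0"
        using coprime_poly_0[OF cop] by metis
      ultimately show ?thesis
        using False deg by (simp add: B_def poly_recip_poly_pcompose)
    qed
  qed
qed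

lemma recip_at_conj_rat_map:
  fixes P Q :: "complex poly"
  assumes cop: "coprime P Q" and d: "d = max (degree P) (degree Q)" "d > 0"
    and fixed: "rat_map P Q (Some b) = Some b"
  defines "A \<equiv> recip_poly d (Q \<circ>\<^sub>p [:b, 1:])" and "B \<equiv> recip_poly d ((P - smult b Q) \<circ>\<^sub>p [:b, 1:])"
  shows "recip_at b \<circ> rat_map P Q \<circ> recip_at_inv b = rat_map A B"
proof
  fix q
  note AB = recip_conj_coprime[OF cop d fixed, folded A_def B_def]
  have R: "rat_map P Q = rat_map0 P Q" and R_AB: "rat_map A B = rat_map0 A B"
    using cop AB(1) by (simp_all add: rat_map_coprime)
  have deg: "degree Q \<le> d" "degree (P - smult b Q) \<le> d"
    using d(1) by (auto intro!: degree_diff_le order.trans[OF degree_smult_le])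
  have A_0: "poly A 0 = coeff Q d" and B_0: "poly B 0 = coeff P d - b * coeff Q d"
    using deg by (simp_all add: A_def B_def poly_recip_poly_pcompose_0)
  have A_at: "poly A w = w ^ d * poly Q (b + inverse w)"
    and B_at: "poly B w = w ^ d * (poly P (b + inverse w) - b * poly Q (b + inverse w))"
    if "w \<noteq> 0" for w
    using deg that by (simp_all add: A_def B_def poly_recip_poly_pcompose)
  show "(recip_at b \<circ> rat_map P Q \<circ> recip_at_inv b) q = rat_map A B q"
  proof (cases q)
    case None
    have "rat_map0 A B None = sphere_point (coeff A d) (coeff B d)"
      using AB d(2) by (intro rat_map0_None) auto
    then show ?thesis
      using None fixed AB(3)
      by (simp add: R_AB recip_at_inv_def recip_at_def coeff_eq_0 sphere_point_def)
  next
    case (Some w)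
    have "coeff P d \<noteq> 0 \<or> coeff Q d \<noteq> 0"
      using d by (cases "degree Q \<le> degree P") (auto simp: max_def)
    moreover have "poly P (b + inverse w) \<noteq> 0 \<or> poly Q (b + inverse w) \<noteq> 0"
      using coprime_poly_0[OF cop] .
    ultimately show ?thesis
      using Some
      by (cases "w = 0")
         (simp_all add: R R_AB recip_at_inv_def rat_map0_None[OF d] recip_at_sphere_point
           rat_map0_Some A_0 B_0 A_at B_at)
  qed
qed

lemma recip_conj_fixed_point_poly:
  fixes P Q :: "complex poly"
  assumes "degree P \<le> d" "degree Q \<le> d"
  shows "[:0, 1:] * recip_poly d ((P - smult b Q) \<circ>\<^sub>p [:b, 1:]) - recip_poly d (Q \<circ>\<^sub>p [:b, 1:])
    = - recip_poly (Suc d) (([:0, 1:] * Q - P) \<circ>\<^sub>p [:b, 1:])"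
proof (rule poly_eqI_nonzero)
  fix w :: complex
  assume "w \<noteq> 0"
  have "degree (P - smult b Q) \<le> d" "degree ([:0, 1:] * Q - P) \<le> Suc d"
    using assms by (auto intro!: degree_diff_le order.trans[OF degree_smult_le]
        order.trans[OF degree_mult_le])
  moreover have "w ^ Suc d * (b + inverse w) = w ^ Suc d * b + w ^ d"
    using \<open>w \<noteq> 0\<close> by (simp add: distrib_left)
  ultimately show "poly ([:0, 1:] * recip_poly d ((P - smult b Q) \<circ>\<^sub>p [:b, 1:])
      - recip_poly d (Q \<circ>\<^sub>p [:b, 1:])) w
    = poly (- recip_poly (Suc d) (([:0, 1:] * Q - P) \<circ>\<^sub>p [:b, 1:])) w"
    using assms \<open>w \<noteq> 0\<close> by (simp add: poly_recip_poly_pcompose algebra_simps)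
qed

lemma multiplier_recip_conj:
  fixes P Q :: "complex poly"
  assumes cop: "coprime P Q" and d: "d = max (degree P) (degree Q)" "d > 0"
    and fixed_b: "rat_map P Q (Some b) = Some b"
  defines "A \<equiv> recip_poly d (Q \<circ>\<^sub>p [:b, 1:])" and "B \<equiv> recip_poly d ((P - smult b Q) \<circ>\<^sub>p [:b, 1:])"
  assumes fixed: "rat_map A B (Some y) = Some y"
  shows "multiplier (rat_map A B) (Some y)
    = 1 + poly (pderiv (recip_poly (Suc d) (([:0, 1:] * Q - P) \<circ>\<^sub>p [:b, 1:]))) y / poly B y"
proof -
  have "[:0, 1:] * B - A = - recip_poly (Suc d) (([:0, 1:] * Q - P) \<circ>\<^sub>p [:b, 1:])"
    unfolding A_def B_def using d(1) by (intro recip_conj_fixed_point_poly) auto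
  then show ?thesis
    using multiplier_rat_map_Some[OF recip_conj_coprime(1)[OF cop d fixed_b, folded A_def B_def] fixed]
    by (simp add: pderiv_minus)
qed

lemma multiplier_recip_at_conj_infinity:
  fixes P Q :: "complex poly"
  assumes cop: "coprime P Q" and d: "d = max (degree P) (degree Q)" "d > 0"
    and fixed_b: "rat_map P Q (Some b) = Some b" and fixed: "rat_map P Q None = None"
  defines "A \<equiv> recip_poly d (Q \<circ>\<^sub>p [:b, 1:])" and "B \<equiv> recip_poly d ((P - smult b Q) \<circ>\<^sub>p [:b, 1:])"
  shows "multiplier (rat_map A B) (Some 0) = multiplier (rat_map P Q) None"
proof -
  have "rat_map A B (Some 0) = Some 0"
    using conj_fixed_point[OF inj_recip_at recip_at_conj_rat_map[OF cop d fixed_b, folded inv_recip_at]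
        fixed]
    by (simp add: A_def B_def recip_at_def)
  note mult = multiplier_recip_conj[OF cop d fixed_b, folded A_def B_def, OF this]
  have "degree Q < degree P"
    using fixed by (simp add: rat_map_coprime[OF cop] rat_map0_fixed_None)
  then have dP: "degree P = d" and "coeff P d \<noteq> 0" and "coeff Q d = 0"
    using d by (auto simp: coeff_eq_0)
  have "degree ([:0, 1:] * Q - P) \<le> d" "degree (P - smult b Q) \<le> d"
    using \<open>degree Q < degree P\<close> d(1)
    by (auto intro!: degree_diff_le order.trans[OF degree_mult_le] order.trans[OF degree_smult_le])
  then have "multiplier (rat_map A B) (Some 0) = 1 + (coeff Q (d - 1) - coeff P d) / coeff P d"
    using mult d(2) \<open>coeff Q d = 0\<close>
    by (simp add: B_def poly_pderiv_recip_poly_pcompose_0 poly_recip_poly_pcompose_0 coeff_pCons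
        split: nat.split)
  also have "\<dots> = coeff Q (d - 1) / coeff P d"
    using \<open>coeff P d \<noteq> 0\<close> by (simp add: field_simps)
  also have "\<dots> = multiplier (rat_map P Q) None"
    using multiplier_rat_map_None[OF cop fixed] dP by simp
  finally show ?thesis .
qed

lemma multiplier_recip_at_conj_finite:
  fixes P Q :: "complex poly"
  assumes cop: "coprime P Q" and d: "d = max (degree P) (degree Q)" "d > 0"
    and fixed_b: "rat_map P Q (Some b) = Some b"
    and fixed: "rat_map P Q (Some x) = Some x" and "x \<noteq> b"
  defines "A \<equiv> recip_poly d (Q \<circ>\<^sub>p [:b, 1:])" and "B \<equiv> recip_poly d ((P - smult b Q) \<circ>\<^sub>p [:b, 1:])"
  shows "multiplier (rat_map A B) (Some (inverse (x - b))) = multiplier (rat_map P Q) (Some x)"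
proof -
  define y E where "y = inverse (x - b)" and "E = [:0, 1:] * Q - P"
  have "y \<noteq> 0" and x: "b + inverse y = x" and "y * (x - b) = 1"
    using \<open>x \<noteq> b\<close> by (simp_all add: y_def)
  have "rat_map A B (Some y) = Some y"
    using conj_fixed_point[OF inj_recip_at recip_at_conj_rat_map[OF cop d fixed_b, folded inv_recip_at]
        fixed] \<open>x \<noteq> b\<close>
    by (simp add: A_def B_def y_def recip_at_def)
  note mult = multiplier_recip_conj[OF cop d fixed_b, folded A_def B_def E_def, OF this]
  have Qx: "poly Q x \<noteq> 0" and Px: "poly P x = x * poly Q x"
    using fixed by (simp_all add: rat_map_coprime[OF cop] rat_map0_fixed_Some)
  have "degree E \<le> Suc d" "degree (P - smult b Q) \<le> d"
    using d(1) unfolding E_def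
    by (auto intro!: degree_diff_le order.trans[OF degree_mult_le] order.trans[OF degree_smult_le])
  then have E': "y\<^sup>2 * poly (pderiv (recip_poly (Suc d) (E \<circ>\<^sub>p [:b, 1:]))) y
      = - (y ^ Suc d * poly (pderiv E) x)"
    and B_y: "poly B y = y ^ d * ((x - b) * poly Q x)"
    using \<open>y \<noteq> 0\<close> x Px
    by (simp_all add: pderiv_recip_poly_pcompose_at_root E_def B_def poly_recip_poly_pcompose
        algebra_simps)
  have "poly (pderiv (recip_poly (Suc d) (E \<circ>\<^sub>p [:b, 1:]))) y / poly B y
      = (y\<^sup>2 * poly (pderiv (recip_poly (Suc d) (E \<circ>\<^sub>p [:b, 1:]))) y) / (y\<^sup>2 * poly B y)"
    using \<open>y \<noteq> 0\<close> by simp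
  also have "\<dots> = - (y ^ d * y * poly (pderiv E) x) / (y ^ d * y * (y * (x - b)) * poly Q x)"
    unfolding E' B_y by (simp add: power2_eq_square mult_ac)
  also have "\<dots> = - poly (pderiv E) x / poly Q x"
    using \<open>y \<noteq> 0\<close> \<open>y * (x - b) = 1\<close> by simp
  finally show ?thesis
    using mult multiplier_rat_map_Some[OF cop fixed] by (simp add: E_def y_def)
qed

lemma normalizing_mobius_exists:
  fixes P Q :: "complex poly"
  assumes cop: "coprime P Q" and d: "d = max (degree P) (degree Q)" "d > 0"
    and fixed: "rat_map P Q \<beta> = \<beta>"
  obtains a b c e A B where "mobius a b c e \<beta> = None" and "a * e - b * c \<noteq> 0"
    and "inj (mobius a b c e)"
    and "mobius a b c e \<circ> rat_map P Q \<circ> inv (mobius a b c e) = rat_map A B"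
    and "coprime A B" and "degree A \<le> d" and "degree B < d"
    and "\<And>q. rat_map P Q q = q \<Longrightarrow> q \<noteq> \<beta> \<Longrightarrow>
      multiplier (rat_map A B) (mobius a b c e q) = multiplier (rat_map P Q) q"
proof (cases \<beta>)
  case None
  then have "degree Q < degree P"
    using fixed by (simp add: rat_map_coprime[OF cop] rat_map0_fixed_None)
  then show ?thesis
    using None cop d by (intro that[where a = 1 and b = 0 and c = 0 and e = 1]) (simp_all add: mobius_id)
next
  case (Some z)
  then have fixed_z: "rat_map P Q (Some z) = Some z"
    using fixed by simp
  have mult: "multiplier (rat_map (recip_poly d (Q \<circ>\<^sub>p [:z, 1:])) (recip_poly d ((P - smult z Q) \<circ>\<^sub>p [:z, 1:])))
      (recip_at z q) = multiplier (rat_map P Q) q" if "rat_map P Q q = q" "q \<noteq> \<beta>" for q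
  proof (cases q)
    case None
    then show ?thesis
      using multiplier_recip_at_conj_infinity[OF cop d fixed_z] that by (simp add: recip_at_def)
  next
    case (Some x)
    then show ?thesis
      using multiplier_recip_at_conj_finite[OF cop d fixed_z, of x] that \<open>\<beta> = Some z\<close>
      by (simp add: recip_at_def)
  qed
  show ?thesis
    using that[where a = 0 and b = 1 and c = 1 and e = "- z"] recip_at_conj_rat_map[OF cop d fixed_z]
      recip_conj_coprime[OF cop d fixed_z] mult Some
    by (simp add: mobius_recip_at inv_recip_at inj_recip_at recip_at_def)
qed

section \<open>Newton maps\<close>

lemma poly_sum_prod_remove:
  fixes a w :: "'i \<Rightarrow> 'a::comm_ring_1"
  assumes "finite I" "k \<in> I"
  shows "poly (\<Sum>i\<in>I. smult (w i) (\<Prod>j\<in>I - {i}. [:- a j, 1:])) (a k)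
    = w k * (\<Prod>j\<in>I - {k}. a k - a j)"
proof -
  have "(\<Prod>j\<in>I - {i}. a k - a j) = 0" if "i \<in> I - {k}" for i
    using assms that by (intro prod_zero) auto
  then have "(\<Sum>i\<in>I - {k}. w i * (\<Prod>j\<in>I - {i}. a k - a j)) = 0"
    by simp
  then show ?thesis
    using sum.remove[OF assms, of "\<lambda>i. w i * (\<Prod>j\<in>I - {i}. a k - a j)"]
    by (simp add: poly_sum poly_prod)
qed

lemma pderiv_prod_linear_powers:
  fixes a :: "'i \<Rightarrow> 'a::idom"
  assumes "finite I" and m: "\<And>i. i \<in> I \<Longrightarrow> m i \<ge> 1"
  shows "pderiv (\<Prod>i\<in>I. [:- a i, 1:] ^ m i) = (\<Prod>i\<in>I. [:- a i, 1:] ^ (m i - 1))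
    * (\<Sum>i\<in>I. smult (of_nat (m i)) (\<Prod>j\<in>I - {i}. [:- a j, 1:]))"
proof -
  let ?X = "\<lambda>i. [:- a i, 1:]"
  have power: "?X j ^ m j = ?X j ^ (m j - 1) * ?X j" if "j \<in> I" for j
    using m[OF that] by (metis Suc_diff_le diff_Suc_1 power_Suc2)
  have "(\<Prod>j\<in>I - {i}. ?X j ^ m j) * ?X i ^ (m i - 1)
      = (\<Prod>j\<in>I. ?X j ^ (m j - 1)) * (\<Prod>j\<in>I - {i}. ?X j)" if "i \<in> I" for i
  proof -
    have "(\<Prod>j\<in>I - {i}. ?X j ^ m j) = (\<Prod>j\<in>I - {i}. ?X j ^ (m j - 1)) * (\<Prod>j\<in>I - {i}. ?X j)"
      unfolding prod.distrib[symmetric] by (intro prod.cong) (auto simp: power)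
    moreover have "(\<Prod>j\<in>I. ?X j ^ (m j - 1)) = ?X i ^ (m i - 1) * (\<Prod>j\<in>I - {i}. ?X j ^ (m j - 1))"
      using assms(1) that by (rule prod.remove)
    ultimately show ?thesis
      by (simp add: mult_ac)
  qed
  then show ?thesis
    by (auto simp: pderiv_prod pderiv_power pderiv_pCons sum_distrib_left mult_ac intro!: sum.cong)
qed

lemma prod_linear_powers_eq_mult:
  fixes a :: "'i \<Rightarrow> 'a::comm_ring_1"
  assumes "\<And>i. i \<in> I \<Longrightarrow> m i \<ge> 1"
  shows "(\<Prod>i\<in>I. [:- a i, 1:] ^ m i) = (\<Prod>i\<in>I. [:- a i, 1:] ^ (m i - 1)) * (\<Prod>i\<in>I. [:- a i, 1:])"
  unfolding prod.distrib[symmetric] using assms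
  by (intro prod.cong refl) (metis Suc_diff_le diff_Suc_1 power_Suc2)

lemma poly_eq_smult_prod_of_roots:
  fixes a :: "'i \<Rightarrow> 'a::idom" and F :: "'a poly"
  assumes "finite I" "inj_on a I" "degree F \<le> card I" "\<And>i. i \<in> I \<Longrightarrow> poly F (a i) = 0"
  shows "F = smult (coeff F (card I)) (\<Prod>i\<in>I. [:- a i, 1:])"
proof -
  have "degree (\<Prod>i\<in>I. [:- a i, 1:]) = card I"
    using assms(1) by (simp add: degree_prod_eq_sum_degree)
  moreover have "lead_coeff (\<Prod>i\<in>I. [:- a i, 1:]) = 1"
    unfolding lead_coeff_prod by simp
  moreover have "poly (\<Prod>i\<in>I. [:- a i, 1:]) (a k) = 0" if "k \<in> I" for k
    unfolding poly_prod using assms(1) that by (intro prod_zero) auto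
  ultimately show ?thesis
    using assms card_image[OF assms(2)]
    by (intro poly_eqI_degree_lead_coeff[where A = "a ` I" and n = "card I"]) auto
qed

lemma degree_sum_prod_remove_less:
  fixes a w :: "'i \<Rightarrow> 'a::idom"
  assumes "finite I" "I \<noteq> {}"
  shows "degree (\<Sum>i\<in>I. smult (w i) (\<Prod>j\<in>I - {i}. [:- a j, 1:])) < card I"
proof -
  have "degree (\<Prod>j\<in>I - {i}. [:- a j, 1:]) = card I - 1" if "i \<in> I" for i
    using assms(1) that by (simp add: degree_prod_eq_sum_degree card_Diff_singleton)
  then have "degree (\<Sum>i\<in>I. smult (w i) (\<Prod>j\<in>I - {i}. [:- a j, 1:])) \<le> card I - 1"
    by (intro degree_sum_le assms(1) order.trans[OF degree_smult_le]) simp_all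
  moreover have "card I > 0"
    using assms card_gt_0_iff by blast
  ultimately show ?thesis
    by linarith
qed

lemma prod_linear_powers_newton_ratio:
  fixes I :: "'i set" and a :: "'i \<Rightarrow> complex" and m :: "'i \<Rightarrow> nat" and F B :: "complex poly"
  defines "p \<equiv> \<Prod>i\<in>I. [:- a i, 1:] ^ m i"
  assumes I: "finite I" "inj_on a I" and deg: "degree F \<le> card I" "degree B < card I"
    and "h \<noteq> 0"
    and data: "\<And>i. i \<in> I \<Longrightarrow> poly F (a i) = 0 \<and> poly B (a i) \<noteq> 0 \<and> m i \<ge> 1
      \<and> h * poly B (a i) = of_nat (m i) * poly (pderiv F) (a i)"
  shows "\<exists>C. C \<noteq> 0 \<and> smult h p = C * F \<and> pderiv p = C * B"
proof -
  define L where "L = (\<Prod>i\<in>I. [:- a i, 1:])"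
  define D where "D = (\<Prod>i\<in>I. [:- a i, 1:] ^ (m i - 1))"
  define G where "G = (\<Sum>i\<in>I. smult (of_nat (m i)) (\<Prod>j\<in>I - {i}. [:- a j, 1:]))"
  define c where "c = coeff F (card I)"
  have F: "F = smult c L"
    unfolding c_def L_def using I deg(1) data by (intro poly_eq_smult_prod_of_roots) auto
  have "pderiv L = (\<Sum>i\<in>I. smult 1 (\<Prod>j\<in>I - {i}. [:- a j, 1:]))"
    using pderiv_prod_linear_powers[OF I(1), of "\<lambda>_. 1" a] by (simp add: L_def)
  then have F': "poly (pderiv F) (a k) = c * (\<Prod>j\<in>I - {k}. a k - a j)" if "k \<in> I" for k
    using poly_sum_prod_remove[OF I(1) that, of "\<lambda>_. 1" a] by (simp add: F pderiv_smult)
  have G: "poly G (a k) = of_nat (m k) * (\<Prod>j\<in>I - {k}. a k - a j)" if "k \<in> I" for k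
    unfolding G_def by (rule poly_sum_prod_remove[OF I(1) that])
  obtain k where "k \<in> I"
    using deg(2) by fastforce
  have "c \<noteq> 0"
  proof
    assume "c = 0"
    then have "poly (pderiv F) (a k) = 0"
      using F'[OF \<open>k \<in> I\<close>] by simp
    then show False
      using data[OF \<open>k \<in> I\<close>] \<open>h \<noteq> 0\<close> by auto
  qed
  have "degree G < card I"
    unfolding G_def using I(1) \<open>k \<in> I\<close> by (intro degree_sum_prod_remove_less) auto
  then have "smult h B = smult c G"
    using deg data F' G card_image[OF I(2)]
    by (intro poly_eqI_degree[where A = "a ` I"]) (auto simp: mult_ac)
  then have "G = smult (1 / c) (smult h B)"
    using \<open>c \<noteq> 0\<close> by simp
  then have G_B: "G = smult (h / c) B"
    by simp
  have "p = D * L"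
    unfolding p_def D_def L_def using data by (intro prod_linear_powers_eq_mult) auto
  moreover have "pderiv p = D * G"
    unfolding p_def D_def G_def using data by (intro pderiv_prod_linear_powers I(1)) auto
  moreover have "D \<noteq> 0"
    unfolding D_def using I(1) by simp
  ultimately show ?thesis
    using \<open>c \<noteq> 0\<close> \<open>h \<noteq> 0\<close> F G_B by (intro exI[of _ "smult (h / c) D"]) simp
qed

lemma rat_map_eq_newton_map:
  fixes A B :: "complex poly" and y :: "'i \<Rightarrow> complex"
  assumes "coprime A B" "finite I" "inj_on y I" "degree A \<le> card I" "degree B < card I" "h \<noteq> 0"
    and fixed: "\<And>i. i \<in> I \<Longrightarrow> rat_map A B (Some (y i)) = Some (y i)"
    and mult: "\<And>i. i \<in> I \<Longrightarrow> m i \<ge> 1 \<and>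
      multiplier (rat_map A B) (Some (y i)) = (of_nat (m i) - h) / of_nat (m i)"
  shows "rat_map A B = newton_map h (\<Prod>i\<in>I. [:- y i, 1:] ^ m i)"
proof -
  define F where "F = [:0, 1:] * B - A"
  have R: "rat_map A B = rat_map0 A B"
    using assms(1) by (rule rat_map_coprime)
  have data: "poly F (y i) = 0 \<and> poly B (y i) \<noteq> 0 \<and> m i \<ge> 1
      \<and> h * poly B (y i) = of_nat (m i) * poly (pderiv F) (y i)" if "i \<in> I" for i
  proof -
    have B: "poly B (y i) \<noteq> 0" and A: "poly A (y i) = y i * poly B (y i)"
      using fixed[OF that] by (simp_all add: R rat_map0_fixed_Some)
    have "1 - poly (pderiv F) (y i) / poly B (y i) = (of_nat (m i) - h) / of_nat (m i)"
      using multiplier_rat_map_Some[OF assms(1) fixed[OF that]] mult[OF that] by (simp add: F_def)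
    then have "h * poly B (y i) = of_nat (m i) * poly (pderiv F) (y i)"
      using B mult[OF that] by (simp add: field_simps)
    then show ?thesis
      using A B mult[OF that] by (simp add: F_def)
  qed
  have "degree F \<le> card I"
    unfolding F_def using assms(4,5)
    by (intro degree_diff_le order.trans[OF degree_mult_le]) auto
  then obtain C where "C \<noteq> 0" and C: "smult h (\<Prod>i\<in>I. [:- y i, 1:] ^ m i) = C * F"
      "pderiv (\<Prod>i\<in>I. [:- y i, 1:] ^ m i) = C * B"
    using prod_linear_powers_newton_ratio[OF assms(2,3) _ assms(5,6) data] by blast
  have "newton_map h (\<Prod>i\<in>I. [:- y i, 1:] ^ m i) = rat_map (C * A) (C * B)"
    unfolding newton_map_def C by (simp add: F_def algebra_simps)
  also have "\<dots> = rat_map A B"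
    using rat_map_mult_coprime[OF assms(1) \<open>C \<noteq> 0\<close>] R by simp
  finally show ?thesis ..
qed

theorem mainTheorem9:
  fixes P Q :: "complex poly" and d :: nat and h :: complex
    and \<beta> :: csphere and \<alpha> :: "nat \<Rightarrow> csphere" and m :: "nat \<Rightarrow> nat"
  assumes "coprime P Q"
    and "d = max (degree P) (degree Q)" and "d \<ge> 2"
    and "rat_map P Q \<beta> = \<beta>" and "norm (multiplier (rat_map P Q) \<beta>) > 1"
    and "\<forall>q. rat_map P Q q = q \<and> q \<noteq> \<beta> \<longrightarrow> norm (multiplier (rat_map P Q) q) < 1"
    and "inj_on \<alpha> {1..d}"
    and "\<alpha> ` {1..d} = {q. rat_map P Q q = q \<and> q \<noteq> \<beta>}"
    and "h \<noteq> 0"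
    and "\<forall>i\<in>{1..d}. m i \<ge> 1 \<and>
           multiplier (rat_map P Q) (\<alpha> i) = (of_nat (m i) - h) / of_nat (m i)"
  shows "\<exists>a b c e. a * e - b * c \<noteq> 0 \<and> mobius a b c e \<beta> = None \<and>
           mobius a b c e \<circ> rat_map P Q \<circ> inv (mobius a b c e)
             = newton_map h (\<Prod>i\<in>{1..d}. [:- the (mobius a b c e (\<alpha> i)), 1:] ^ m i)"
proof -
  have "d > 0"
    using assms(3) by simp
  obtain a b c e A B where M_\<beta>: "mobius a b c e \<beta> = None" and det: "a * e - b * c \<noteq> 0"
    and inj_M: "inj (mobius a b c e)"
    and conj: "mobius a b c e \<circ> rat_map P Q \<circ> inv (mobius a b c e) = rat_map A B"
    and AB: "coprime A B" "degree A \<le> d" "degree B < d"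
    and mult: "\<And>q. rat_map P Q q = q \<Longrightarrow> q \<noteq> \<beta> \<Longrightarrow>
      multiplier (rat_map A B) (mobius a b c e q) = multiplier (rat_map P Q) q"
    using normalizing_mobius_exists[OF assms(1,2) \<open>d > 0\<close> assms(4)] by blast
  let ?M = "mobius a b c e"
  define y where "y i = the (?M (\<alpha> i))" for i
  have \<alpha>: "rat_map P Q (\<alpha> i) = \<alpha> i" "\<alpha> i \<noteq> \<beta>" if "i \<in> {1..d}" for i
    using assms(8) that by blast+
  have M_\<alpha>: "?M (\<alpha> i) = Some (y i)" if "i \<in> {1..d}" for i
    using injD[OF inj_M] \<alpha>(2)[OF that] M_\<beta> by (metis y_def option.collapse)
  have inj_y: "inj_on y {1..d}"
    using assms(7) injD[OF inj_M] M_\<alpha> by (metis inj_on_def)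
  have fixed_y: "rat_map A B (Some (y i)) = Some (y i)" if "i \<in> {1..d}" for i
    using conj_fixed_point[OF inj_M conj \<alpha>(1)[OF that]] M_\<alpha>[OF that] by simp
  have mult_y: "m i \<ge> 1 \<and> multiplier (rat_map A B) (Some (y i)) = (of_nat (m i) - h) / of_nat (m i)"
    if "i \<in> {1..d}" for i
    using mult[OF \<alpha>[OF that]] M_\<alpha>[OF that] assms(10) that by simp
  have "rat_map A B = newton_map h (\<Prod>i\<in>{1..d}. [:- y i, 1:] ^ m i)"
    using AB by (intro rat_map_eq_newton_map[OF AB(1) _ inj_y _ _ assms(9) fixed_y mult_y]) simp_all
  then have "?M \<circ> rat_map P Q \<circ> inv ?M = newton_map h (\<Prod>i\<in>{1..d}. [:- the (?M (\<alpha> i)), 1:] ^ m i)"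
    using conj by (simp add: y_def)
  then show ?thesis
    using det M_\<beta> by blast
qed

end
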